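(* Let $G$ be a graph with parameters $(r_2,r_3)$ and let $e$ be an edge of $G$ with $K_3\deg(e)=k$. Then \[2r_3 \leq (r_2-k-1)(r_2-2) + k(k+1).\]
   Context: All graphs are finite, simple and undirected. For a vertex $v$, $K_3\deg(v)$ is the number of triangles of $G$ containing $v$; for an edge $uv$, $K_3\deg(uv)=|N(u)\cap N(v)|$ is the number of triangles containing the edge $uv$, where $N(\cdot)$ denotes the open neighbourhood. A graph $G$ has parameters $(r_2,r_3)$ if every vertex has degree $r_2$ and every vertex has $K_3$-degree $r_3$. *)

theory Defs
  imports Main
begin

definition simple_graph :: "'a set \<Rightarrow> ('a \<Rightarrow> 'a \<Rightarrow> bool) \<Rightarrow> bool" where
  "simple_graph V E \<longleftrightarrow> finite V \<and> (\<forall>u v. E u v \<longrightarrow> u \<in> V \<and> v \<in> V)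
     \<and> (\<forall>u v. E u v \<longrightarrow> E v u) \<and> (\<forall>v. \<not> E v v)"

definition nbhd :: "'a set \<Rightarrow> ('a \<Rightarrow> 'a \<Rightarrow> bool) \<Rightarrow> 'a \<Rightarrow> 'a set" where
  "nbhd V E v = {u \<in> V. E v u}"

definition degree :: "'a set \<Rightarrow> ('a \<Rightarrow> 'a \<Rightarrow> bool) \<Rightarrow> 'a \<Rightarrow> nat" where
  "degree V E v = card (nbhd V E v)"

definition triangles :: "'a set \<Rightarrow> ('a \<Rightarrow> 'a \<Rightarrow> bool) \<Rightarrow> 'a set set" where
  "triangles V E = {T. T \<subseteq> V \<and> card T = 3 \<and> (\<forall>x\<in>T. \<forall>y\<in>T. x \<noteq> y \<longrightarrow> E x y)}"

definition K3deg :: "'a set \<Rightarrow> ('a \<Rightarrow> 'a \<Rightarrow> bool) \<Rightarrow> 'a \<Rightarrow> nat" where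
  "K3deg V E v = card {T \<in> triangles V E. v \<in> T}"

definition K3deg_edge :: "'a set \<Rightarrow> ('a \<Rightarrow> 'a \<Rightarrow> bool) \<Rightarrow> 'a \<Rightarrow> 'a \<Rightarrow> nat" where
  "K3deg_edge V E u v = card (nbhd V E u \<inter> nbhd V E v)"

definition has_params :: "'a set \<Rightarrow> ('a \<Rightarrow> 'a \<Rightarrow> bool) \<Rightarrow> nat \<Rightarrow> nat \<Rightarrow> bool" where
  "has_params V E r2 r3 \<longleftrightarrow> (\<forall>v\<in>V. degree V E v = r2 \<and> K3deg V E v = r3)"

end

theory Submission
  imports Defs
begin

text \<open>Let e(X,Y) count the ordered adjacent pairs in X \<times> Y, so that 2 K3deg(w) = e(N(w),N(w)).
  For the edge uv write A = N(u) \<inter> N(v) (k vertices) and B(u) = N(u) - N(v) - {v},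
  B(v) = N(v) - N(u) - {u} (b = r2 - 1 - k vertices each). As v is adjacent to all of A and to
  none of B(u), e(N(u),N(u)) + e(A,A) = 2 e(A,N(u)) + e(B(u),B(u)); adding the same identity
  for v and using inclusion-exclusion on N(u) \<union> N(v) gives
  4 r3 = 2 e(A, N(u) \<union> N(v)) + e(B(u),B(u)) + e(B(v),B(v)) \<le> 2 k r2 + 2 b (b - 1),
  the bound because every vertex of A has degree r2 and a b-set spans at most b (b - 1) ordered
  pairs.\<close>

text \<open>Edges with both ends in X \<inter> Y are counted twice.\<close>
definition edge_count :: "('a \<Rightarrow> 'a \<Rightarrow> bool) \<Rightarrow> 'a set \<Rightarrow> 'a set \<Rightarrow> nat" where
  "edge_count E X Y = (\<Sum>x\<in>X. card {y\<in>Y. E x y})"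

lemma edge_count_Un_left:
  "finite X \<Longrightarrow> finite Z \<Longrightarrow> X \<inter> Z = {} \<Longrightarrow>
    edge_count E (X \<union> Z) Y = edge_count E X Y + edge_count E Z Y"
  unfolding edge_count_def by (simp add: sum.union_disjoint)

lemma edge_count_Un_right:
  assumes "finite Y" "finite Z" "Y \<inter> Z = {}"
  shows "edge_count E X (Y \<union> Z) = edge_count E X Y + edge_count E X Z"
proof -
  have "card {y \<in> Y \<union> Z. E x y} = card {y\<in>Y. E x y} + card {y\<in>Z. E x y}" for x
    using assms by (subst card_Un_disjoint[symmetric]) (auto intro: arg_cong[where f = card])
  then show ?thesis unfolding edge_count_def by (simp add: sum.distrib)
qed

lemma edge_count_Un_Int_right:
  assumes "finite Y" "finite Z"
  shows "edge_count E X (Y \<union> Z) + edge_count E X (Y \<inter> Z) = edge_count E X Y + edge_count E X Z"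
proof -
  have "card {y \<in> Y \<union> Z. E x y} + card {y \<in> Y \<inter> Z. E x y} = card {y\<in>Y. E x y} + card {y\<in>Z. E x y}" for x
  proof -
    have "{y \<in> Y \<union> Z. E x y} = {y\<in>Y. E x y} \<union> {y\<in>Z. E x y}"
      and "{y \<in> Y \<inter> Z. E x y} = {y\<in>Y. E x y} \<inter> {y\<in>Z. E x y}" by auto
    then show ?thesis using card_Un_Int[of "{y\<in>Y. E x y}" "{y\<in>Z. E x y}"] assms by simp
  qed
  then show ?thesis unfolding edge_count_def by (simp add: sum.distrib[symmetric])
qed

lemma edge_count_commute:
  assumes "finite X" "finite Y" "\<And>x y. E x y \<Longrightarrow> E y x"
  shows "edge_count E X Y = edge_count E Y X"
proof -
  have "edge_count E X Y = (\<Sum>x\<in>X. \<Sum>y\<in>Y. if E x y then 1 else 0)"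
    unfolding edge_count_def using assms(2) by (simp add: sum.If_cases Int_def conj_commute)
  also have "\<dots> = (\<Sum>y\<in>Y. \<Sum>x\<in>X. if E y x then 1 else 0)"
    using assms(3) by (subst sum.swap) (auto intro!: sum.cong)
  also have "\<dots> = edge_count E Y X"
    unfolding edge_count_def using assms(1) by (simp add: sum.If_cases Int_def conj_commute)
  finally show ?thesis .
qed

lemma edge_count_Un_self:
  assumes "finite X" "finite Y" "X \<inter> Y = {}" "\<And>x y. E x y \<Longrightarrow> E y x"
  shows "edge_count E (X \<union> Y) (X \<union> Y) = edge_count E X X + 2 * edge_count E X Y + edge_count E Y Y"
  using assms edge_count_commute[of Y X E]
  by (simp add: edge_count_Un_left edge_count_Un_right)

lemma edge_count_self_le:
  assumes "finite X" "\<And>x. \<not> E x x"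
  shows "edge_count E X X \<le> card X * (card X - 1)"
proof -
  have "card {y\<in>X. E x y} \<le> card X - 1" if "x \<in> X" for x
  proof -
    have "{y\<in>X. E x y} \<subseteq> X - {x}" using assms(2) by auto
    then show ?thesis using assms(1) that by (metis card_Diff_singleton card_mono finite_Diff)
  qed
  then show ?thesis unfolding edge_count_def using sum_mono[of X _ "\<lambda>_. card X - 1"] by simp
qed

lemma finite_nbhd: "simple_graph V E \<Longrightarrow> finite (nbhd V E u)"
  unfolding simple_graph_def nbhd_def by auto

lemma edge_count_le_degree:
  assumes "simple_graph V E" "\<And>x. x \<in> X \<Longrightarrow> degree V E x \<le> r"
  shows "edge_count E X Y \<le> card X * r"
proof -
  have "card {y\<in>Y. E x y} \<le> r" if "x \<in> X" for x
  proof -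
    have "{y\<in>Y. E x y} \<subseteq> nbhd V E x"
      using assms(1) unfolding simple_graph_def nbhd_def by auto
    then show ?thesis using assms(2)[OF that] finite_nbhd[OF assms(1)] unfolding degree_def
      by (meson card_mono order_trans)
  qed
  then show ?thesis unfolding edge_count_def using sum_mono[of X _ "\<lambda>_. r"] by simp
qed

lemma two_K3deg_eq_edge_count:
  assumes g: "simple_graph V E"
  shows "2 * K3deg V E u = edge_count E (nbhd V E u) (nbhd V E u)"
proof -
  let ?N = "nbhd V E u" and ?T = "{T \<in> triangles V E. u \<in> T}"
  define P where "P = (SIGMA w:?N. {x\<in>?N. E w x})"
  define f where "f = (\<lambda>(w, x). {u, w, x})"
  have fin: "finite V" and inV: "\<And>a b. E a b \<Longrightarrow> a \<in> V \<and> b \<in> V"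
    and sym: "\<And>a b. E a b \<Longrightarrow> E b a" and irr: "\<And>a. \<not> E a a"
    using g unfolding simple_graph_def by auto
  have finN: "finite ?N" using finite_nbhd[OF g] .
  have finT: "finite ?T" by (rule finite_subset[of _ "Pow V"]) (auto simp: triangles_def fin)
  have "f ` P \<subseteq> ?T"
  proof
    fix T assume "T \<in> f ` P"
    then obtain w x where "T = {u, w, x}" "E u w" "E u x" "E w x"
      unfolding P_def f_def nbhd_def by auto
    moreover have "u \<noteq> w" "u \<noteq> x" "w \<noteq> x" using calculation irr by metis+
    ultimately show "T \<in> ?T" unfolding triangles_def using inV sym by auto
  qed
  moreover have "finite P" unfolding P_def using finN by auto
  ultimately have "card P = (\<Sum>T\<in>?T. card {p\<in>P. f p = T})"
    using sum.group[of P ?T f "\<lambda>_. 1::nat"] finT by (simp only: card_eq_sum)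
  also have "\<dots> = (\<Sum>T\<in>?T. 2)"
  proof (rule sum.cong)
    fix T assume T: "T \<in> ?T"
    then have "u \<in> T" "card T = 3" unfolding triangles_def by auto
    then have "card (T - {u}) = 2" by simp
    then obtain a b where "T - {u} = {a, b}" "a \<noteq> b" by (meson card_2_iff)
    then have ab: "T = {u, a, b}" "u \<notin> {a, b}" "a \<noteq> b" using \<open>u \<in> T\<close> by blast+
    have adj: "E x y" if "x \<in> T" "y \<in> T" "x \<noteq> y" for x y
      using T that unfolding triangles_def by auto
    have "{p\<in>P. f p = T} = {(a, b), (b, a)}"
    proof (intro equalityI subsetI)
      fix p assume "p \<in> {p\<in>P. f p = T}"
      then obtain w x where p: "p = (w, x)" "E u w" "E u x" "E w x" "{u, w, x} = T"
        unfolding P_def f_def nbhd_def by auto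
      then have "u \<noteq> w" "u \<noteq> x" "w \<noteq> x" using irr by metis+
      then have "{w, x} = T - {u}" using p(5) by auto
      also have "\<dots> = {a, b}" using ab by auto
      finally have "{w, x} = {a, b}" .
      then show "p \<in> {(a, b), (b, a)}" using p(1) \<open>w \<noteq> x\<close> by (auto simp: doubleton_eq_iff)
    next
      fix p assume "p \<in> {(a, b), (b, a)}"
      moreover have "E u a" "E u b" "E a b" "E b a" using adj ab by auto
      ultimately show "p \<in> {p\<in>P. f p = T}"
        using ab(1) inV unfolding P_def f_def nbhd_def by (auto simp: insert_commute)
    qed
    then show "card {p\<in>P. f p = T} = 2" using ab by simp
  qed simp
  finally show ?thesis using finN unfolding edge_count_def K3deg_def P_def by simp
qed

lemma K3deg_edge_commute: "K3deg_edge V E u v = K3deg_edge V E v u"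
  unfolding K3deg_edge_def by (simp add: Int_commute)

definition private_nbhd :: "'a set \<Rightarrow> ('a \<Rightarrow> 'a \<Rightarrow> bool) \<Rightarrow> 'a \<Rightarrow> 'a \<Rightarrow> 'a set" where
  "private_nbhd V E u v = nbhd V E u - nbhd V E v - {v}"

lemma finite_private_nbhd: "simple_graph V E \<Longrightarrow> finite (private_nbhd V E u v)"
  unfolding private_nbhd_def by (simp add: finite_nbhd)

lemma nbhd_eq_common_Un_private:
  assumes "simple_graph V E" "E u v"
  shows "nbhd V E u = (nbhd V E u \<inter> nbhd V E v) \<union> insert v (private_nbhd V E u v)"
    and "(nbhd V E u \<inter> nbhd V E v) \<inter> insert v (private_nbhd V E u v) = {}"
  using assms unfolding simple_graph_def private_nbhd_def nbhd_def by auto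

lemma degree_eq_Suc_K3deg_edge:
  assumes "simple_graph V E" "E u v"
  shows "degree V E u = Suc (K3deg_edge V E u v + card (private_nbhd V E u v))"
proof -
  let ?A = "nbhd V E u \<inter> nbhd V E v" and ?B = "private_nbhd V E u v"
  have "finite ?A" "finite ?B"
    using finite_nbhd[OF assms(1), of u] finite_private_nbhd[OF assms(1)] by auto
  moreover have "v \<notin> ?B" unfolding private_nbhd_def by simp
  ultimately have "card (nbhd V E u) = card ?A + Suc (card ?B)"
    using nbhd_eq_common_Un_private[OF assms] by (metis card_Un_disjoint card_insert_disjoint finite_insert)
  then show ?thesis unfolding degree_def K3deg_edge_def by simp
qed

lemma edge_count_nbhd_self:
  assumes g: "simple_graph V E" and uv: "E u v"
  defines "A \<equiv> nbhd V E u \<inter> nbhd V E v" and "B \<equiv> private_nbhd V E u v"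
  shows "edge_count E (nbhd V E u) (nbhd V E u) + edge_count E A A
    = 2 * edge_count E A (nbhd V E u) + edge_count E B B"
proof -
  have sym: "\<And>a b. E a b \<Longrightarrow> E b a" and irr: "\<And>a. \<not> E a a"
    using g unfolding simple_graph_def by auto
  have finA: "finite A" and finB: "finite B"
    using finite_nbhd[OF g, of u] finite_private_nbhd[OF g] unfolding A_def B_def by auto
  note split = nbhd_eq_common_Un_private[OF g uv, folded A_def B_def]
  have "v \<notin> B" unfolding B_def private_nbhd_def by simp
  moreover have "{y\<in>B. E v y} = {}"
    using g unfolding B_def private_nbhd_def nbhd_def simple_graph_def by auto
  ultimately have "edge_count E (insert v B) (insert v B) = edge_count E B B"
    using edge_count_Un_self[of "{v}" B E] finB sym irr by (simp add: edge_count_def)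
  moreover have "edge_count E (nbhd V E u) (nbhd V E u)
      = edge_count E A A + 2 * edge_count E A (insert v B) + edge_count E (insert v B) (insert v B)"
    using edge_count_Un_self[OF finA _ split(2) sym, folded split(1)] finB by simp
  moreover have "edge_count E A (nbhd V E u) = edge_count E A A + edge_count E A (insert v B)"
    using edge_count_Un_right[OF finA _ split(2), folded split(1)] finB by simp
  ultimately show ?thesis by simp
qed

lemma edge_count_nbhd_self_add:
  assumes g: "simple_graph V E" and uv: "E u v"
  defines "A \<equiv> nbhd V E u \<inter> nbhd V E v"
  shows "edge_count E (nbhd V E u) (nbhd V E u) + edge_count E (nbhd V E v) (nbhd V E v)
    = 2 * edge_count E A (nbhd V E u \<union> nbhd V E v)
      + edge_count E (private_nbhd V E u v) (private_nbhd V E u v)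
      + edge_count E (private_nbhd V E v u) (private_nbhd V E v u)"
proof -
  have vu: "E v u" using g uv unfolding simple_graph_def by auto
  have "edge_count E (nbhd V E u) (nbhd V E u) + edge_count E A A
      = 2 * edge_count E A (nbhd V E u) + edge_count E (private_nbhd V E u v) (private_nbhd V E u v)"
    using edge_count_nbhd_self[OF g uv] unfolding A_def .
  moreover have "edge_count E (nbhd V E v) (nbhd V E v) + edge_count E A A
      = 2 * edge_count E A (nbhd V E v) + edge_count E (private_nbhd V E v u) (private_nbhd V E v u)"
    using edge_count_nbhd_self[OF g vu] unfolding A_def by (simp add: Int_commute)
  moreover have "edge_count E A (nbhd V E u) + edge_count E A (nbhd V E v)
      = edge_count E A (nbhd V E u \<union> nbhd V E v) + edge_count E A A"
    unfolding A_def by (rule edge_count_Un_Int_right[symmetric]) (simp_all add: finite_nbhd[OF g])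
  ultimately show ?thesis by linarith
qed

theorem lemma3p4:
  fixes V :: "'a set" and E :: "'a \<Rightarrow> 'a \<Rightarrow> bool" and r2 r3 k :: nat and u v :: 'a
  assumes "simple_graph V E"
    and "has_params V E r2 r3"
    and "E u v"
    and "K3deg_edge V E u v = k"
  shows "2 * int r3 \<le> (int r2 - int k - 1) * (int r2 - 2) + int k * (int k + 1)"
proof -
  note g = assms(1) and params = assms(2)[unfolded has_params_def]
  have irr: "\<And>x. \<not> E x x" and vu: "E v u" and uV: "u \<in> V" and vV: "v \<in> V"
    using g assms(3) unfolding simple_graph_def by auto
  let ?A = "nbhd V E u \<inter> nbhd V E v"
  let ?Bu = "private_nbhd V E u v" and ?Bv = "private_nbhd V E v u"
  define b where "b = card ?Bu"
  have r2: "r2 = Suc (k + b)" and card_Bv: "card ?Bv = b"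
    using degree_eq_Suc_K3deg_edge[OF g assms(3)] degree_eq_Suc_K3deg_edge[OF g vu] params uV vV
      K3deg_edge_commute[of V E u v] unfolding b_def assms(4) by auto
  have r3: "2 * r3 = edge_count E (nbhd V E w) (nbhd V E w)" if "w \<in> V" for w
    using two_K3deg_eq_edge_count[OF g, of w] params that by simp
  have "4 * r3 = 2 * edge_count E ?A (nbhd V E u \<union> nbhd V E v)
      + edge_count E ?Bu ?Bu + edge_count E ?Bv ?Bv"
    using r3[OF uV] r3[OF vV] edge_count_nbhd_self_add[OF g assms(3)] by linarith
  moreover have "edge_count E ?A (nbhd V E u \<union> nbhd V E v) \<le> k * r2"
    unfolding assms(4)[unfolded K3deg_edge_def, symmetric]
    by (rule edge_count_le_degree[OF g]) (use params in \<open>auto simp: nbhd_def\<close>)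
  moreover have "edge_count E ?Bu ?Bu \<le> b * (b - 1)" "edge_count E ?Bv ?Bv \<le> b * (b - 1)"
    using edge_count_self_le[where E = E, OF finite_private_nbhd[OF g] irr] card_Bv
    unfolding b_def by metis+
  ultimately have "2 * r3 \<le> k * r2 + b * (b - 1)" by linarith
  then have "2 * int r3 \<le> int k * int r2 + int (b * (b - 1))"
    by (metis of_nat_add of_nat_le_iff of_nat_mult of_nat_numeral)
  moreover have "int (b * (b - 1)) = int b * (int b - 1)" by (cases b) (auto simp: algebra_simps)
  ultimately show ?thesis unfolding r2 by (simp add: algebra_simps)
qed

end
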